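(* Let $\eta=(\eta_{\alpha\beta})_{\alpha,\beta=1}^n$ be a constant symmetric invertible matrix with inverse $(\eta^{\alpha\beta})$, and let $F(t^1,\dots,t^n)$ satisfy the associativity equations $$\frac{\partial^3 F}{\partial t^\alpha\partial t^\beta\partial t^\lambda}\eta^{\lambda\mu}\frac{\partial^3 F}{\partial t^\gamma\partial t^\delta\partial t^\mu}=\frac{\partial^3 F}{\partial t^\gamma\partial t^\beta\partial t^\lambda}\eta^{\lambda\mu}\frac{\partial^3 F}{\partial t^\alpha\partial t^\delta\partial t^\mu}\quad\text{for all }\alpha,\beta,\gamma,\delta.$$ Define $$\widetilde F(t^0,t^1,\dots,t^n,t^{n+1})=\frac12\left(\eta_{\alpha\beta}t^\alpha t^\beta t^0+(t^0)^2t^{n+1}\right)+F(t^1,\dots,t^n)$$ and the $(n+2)\times(n+2)$ matrix (indices $0,1,\dots,n,n+1$) $$\widetilde\eta=\begin{pmatrix}0&0&1\\0&\eta&0\\1&0&0\end{pmatrix}.$$ Then $\widetilde F$ satisfies the associativity equations in the variables $t^0,\dots,t^{n+1}$ with $\eta$ replaced by $\widetilde\eta$ (and $\eta^{\lambda\mu}$ by the entries $\widetilde\eta^{kl}$ of $\widetilde\eta^{-1}$); the algebra with basis $e_0,\dots,e_{n+1}$ and multiplication $e_i\cdot e_j=c^k_{ij}e_k$, $c^k_{ij}=\widetilde\eta^{kl}\frac{\partial^3\widetilde F}{\partial t^l\partial t^i\partial t^j}$, is associative, has unity $e_0$ (i.e. $e_0\cdot e_k=e_k$ for all $k=0,\dots,n+1$),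 and $e_{n+1}^2=0$. Moreover, if $F$ is quasihomogeneous, i.e. $F(\lambda^{d_1}t^1,\dots,\lambda^{d_n}t^n)=\lambda^{d_F}F(t^1,\dots,t^n)$, and there is a constant $c$ with $d_\alpha+d_\beta=c$ for all $\alpha,\beta$ such that $\eta_{\alpha\beta}\neq0$, then $\widetilde F$ is quasihomogeneous with the same $d_F$, the same $d_1,\dots,d_n$, and $d_0=d_F-c$, $d_{n+1}=2c-d_F$.
   Context: Summation over repeated indices is understood. Quasihomogeneity of a function $G(t^0,\dots,t^{n+1})$ with exponents $d_0,\dots,d_{n+1}$ and degree $d_G$ means $G(\lambda^{d_0}t^0,\dots,\lambda^{d_{n+1}}t^{n+1})=\lambda^{d_G}G(t^0,\dots,t^{n+1})$. *)

theory Defs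
  imports "HOL-Analysis.Analysis"
begin

text \<open>Points are functions t :: nat \<Rightarrow> real; t i is the coordinate t^i.
  Matrices are functions nat \<Rightarrow> nat \<Rightarrow> real, only their entries on the
  relevant index set matter.\<close>

definition pd :: "nat \<Rightarrow> ((nat \<Rightarrow> real) \<Rightarrow> real) \<Rightarrow> (nat \<Rightarrow> real) \<Rightarrow> real" where
  "pd i G = (\<lambda>t. deriv (\<lambda>s. G (t(i := s))) (t i))"

fun iter_pd :: "nat list \<Rightarrow> ((nat \<Rightarrow> real) \<Rightarrow> real) \<Rightarrow> (nat \<Rightarrow> real) \<Rightarrow> real" where
  "iter_pd [] G = G"
| "iter_pd (i # is) G = pd i (iter_pd is G)"

definition coord_Ck :: "nat \<Rightarrow> nat set \<Rightarrow> ((nat \<Rightarrow> real) \<Rightarrow> real) \<Rightarrow> bool" where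
  "coord_Ck k I G \<longleftrightarrow>
     (\<forall>is. set is \<subseteq> I \<and> length is \<le> k \<longrightarrow>
        continuous_on UNIV (iter_pd is G) \<and>
        (length is < k \<longrightarrow>
           (\<forall>i\<in>I. \<forall>t. (\<lambda>s. iter_pd is G (t(i := s))) differentiable (at (t i)))))"

definition depends_only :: "nat set \<Rightarrow> ((nat \<Rightarrow> real) \<Rightarrow> real) \<Rightarrow> bool" where
  "depends_only I G \<longleftrightarrow> (\<forall>t t'. (\<forall>i\<in>I. t i = t' i) \<longrightarrow> G t = G t')"

definition assoc_eqs :: "nat set \<Rightarrow> (nat \<Rightarrow> nat \<Rightarrow> real) \<Rightarrow> ((nat \<Rightarrow> real) \<Rightarrow> real) \<Rightarrow> bool" where
  "assoc_eqs I g G \<longleftrightarrow>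
     (\<forall>t. \<forall>a\<in>I. \<forall>b\<in>I. \<forall>c\<in>I. \<forall>d\<in>I.
        (\<Sum>l\<in>I. \<Sum>m\<in>I. iter_pd [a, b, l] G t * g l m * iter_pd [c, d, m] G t)
      = (\<Sum>l\<in>I. \<Sum>m\<in>I. iter_pd [c, b, l] G t * g l m * iter_pd [a, d, m] G t))"

definition struct_const :: "nat set \<Rightarrow> (nat \<Rightarrow> nat \<Rightarrow> real) \<Rightarrow> ((nat \<Rightarrow> real) \<Rightarrow> real)
     \<Rightarrow> (nat \<Rightarrow> real) \<Rightarrow> nat \<Rightarrow> nat \<Rightarrow> nat \<Rightarrow> real" where
  "struct_const I g G t k i j = (\<Sum>l\<in>I. g k l * iter_pd [l, i, j] G t)"

definition quasihom :: "nat set \<Rightarrow> (nat \<Rightarrow> real) \<Rightarrow> real \<Rightarrow> ((nat \<Rightarrow> real) \<Rightarrow> real) \<Rightarrow> bool" where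
  "quasihom I d dG G \<longleftrightarrow>
     (\<forall>lam>0. \<forall>t. G (\<lambda>i. if i \<in> I then lam powr d i * t i else t i) = lam powr dG * G t)"

definition Ftilde :: "nat \<Rightarrow> (nat \<Rightarrow> nat \<Rightarrow> real) \<Rightarrow> ((nat \<Rightarrow> real) \<Rightarrow> real) \<Rightarrow> (nat \<Rightarrow> real) \<Rightarrow> real" where
  "Ftilde n eta F t =
     1/2 * ((\<Sum>a\<in>{1..n}. \<Sum>b\<in>{1..n}. eta a b * t a * t b) * t 0 + (t 0)^2 * t (n+1)) + F t"

definition eta_tilde :: "nat \<Rightarrow> (nat \<Rightarrow> nat \<Rightarrow> real) \<Rightarrow> nat \<Rightarrow> nat \<Rightarrow> real" where
  "eta_tilde n eta k l =
     (if k = 0 then (if l = n+1 then 1 else 0)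
      else if k = n+1 then (if l = 0 then 1 else 0)
      else if l = 0 \<or> l = n+1 then 0 else eta k l)"

end

theory Submission
  imports Defs "Jordan_Normal_Form.Determinant"
begin

(* The cubic part of Ftilde is C(t,t,t)/6 for a constant symmetric tensor C with
   C(0,x,y) = eta_tilde(x,y), C(n+1,x,y) nonzero only for x = y = 0, and C = 0 on {1..n}^3.
   So the third derivatives of Ftilde are C plus those of F, which vanish unless all indices
   lie in {1..n} and are symmetric by Schwarz's theorem (proved here from the mean value
   theorem). The inverse M of eta_tilde has the same block form, with eta_inv in the middle.
   In a WDVV equation an index 0 makes both sides agree, since e_0 acts as a unit; otherwise
   an index n+1 makes both sides vanish; and with all indices in {1..n} it is the equation
   for F. Reordering sums turns WDVV into associativity of the structure constants, while
   unity and the vanishing of e_(n+1)^2 are read off from C. *)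

definition has_partial_deriv ::
    "nat \<Rightarrow> ((nat \<Rightarrow> real) \<Rightarrow> real) \<Rightarrow> ((nat \<Rightarrow> real) \<Rightarrow> real) \<Rightarrow> bool" where
  "has_partial_deriv i G G' \<longleftrightarrow> (\<forall>t. ((\<lambda>s. G (t(i := s))) has_real_derivative G' t) (at (t i)))"

definition partial_differentiable :: "nat \<Rightarrow> ((nat \<Rightarrow> real) \<Rightarrow> real) \<Rightarrow> bool" where
  "partial_differentiable i G \<longleftrightarrow> (\<forall>t. (\<lambda>s. G (t(i := s))) differentiable (at (t i)))"

lemma has_partial_deriv_imp_pd: "has_partial_deriv i G G' \<Longrightarrow> pd i G = G'"
  unfolding has_partial_deriv_def pd_def by (auto intro: DERIV_imp_deriv)

lemma has_partial_deriv_imp_partial_differentiable: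
  "has_partial_deriv i G G' \<Longrightarrow> partial_differentiable i G"
  unfolding has_partial_deriv_def partial_differentiable_def real_differentiable_def by blast

lemma partial_differentiable_has_partial_deriv:
  "partial_differentiable i G \<Longrightarrow> has_partial_deriv i G (pd i G)"
  unfolding has_partial_deriv_def partial_differentiable_def pd_def
  by (simp add: DERIV_deriv_iff_real_differentiable)

lemma has_partial_deriv_const: "has_partial_deriv i (\<lambda>_. c) (\<lambda>_. 0)"
  unfolding has_partial_deriv_def by simp

lemma has_partial_deriv_coord: "has_partial_deriv i (\<lambda>t. t k) (\<lambda>_. if k = i then 1 else 0)"
  unfolding has_partial_deriv_def by (auto intro!: derivative_eq_intros)

lemma has_partial_deriv_add:
  "has_partial_deriv i G G' \<Longrightarrow> has_partial_deriv i H H' \<Longrightarrow>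
    has_partial_deriv i (\<lambda>t. G t + H t) (\<lambda>t. G' t + H' t)"
  unfolding has_partial_deriv_def by (auto intro!: derivative_eq_intros)

lemma has_partial_deriv_mult:
  "has_partial_deriv i G G' \<Longrightarrow> has_partial_deriv i H H' \<Longrightarrow>
    has_partial_deriv i (\<lambda>t. G t * H t) (\<lambda>t. G' t * H t + G t * H' t)"
  unfolding has_partial_deriv_def by (auto intro!: derivative_eq_intros)

lemma has_partial_deriv_sum:
  "(\<And>a. a \<in> A \<Longrightarrow> has_partial_deriv i (G a) (G' a)) \<Longrightarrow>
    has_partial_deriv i (\<lambda>t. \<Sum>a\<in>A. G a t) (\<lambda>t. \<Sum>a\<in>A. G' a t)"
  unfolding has_partial_deriv_def by (auto intro!: DERIV_sum)

lemma has_partial_deriv_divide_const: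
  "has_partial_deriv i G G' \<Longrightarrow> has_partial_deriv i (\<lambda>t. G t / c) (\<lambda>t. G' t / c)"
  unfolding has_partial_deriv_def divide_inverse by (auto intro: DERIV_cmult_right)

lemmas has_partial_deriv_intros =
  has_partial_deriv_const has_partial_deriv_coord has_partial_deriv_add
  has_partial_deriv_mult has_partial_deriv_sum

lemma pd_add:
  "partial_differentiable i G \<Longrightarrow> partial_differentiable i H \<Longrightarrow>
    pd i (\<lambda>t. G t + H t) = (\<lambda>t. pd i G t + pd i H t)"
  by (intro has_partial_deriv_imp_pd has_partial_deriv_add partial_differentiable_has_partial_deriv)

lemma iter_pd_add:
  assumes "set is \<subseteq> J"
    and "\<And>js i. set js \<subseteq> J \<Longrightarrow> length js < length is \<Longrightarrow> i \<in> J \<Longrightarrow>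
      partial_differentiable i (iter_pd js G)"
    and "\<And>js i. set js \<subseteq> J \<Longrightarrow> length js < length is \<Longrightarrow> i \<in> J \<Longrightarrow>
      partial_differentiable i (iter_pd js H)"
  shows "iter_pd is (\<lambda>t. G t + H t) = (\<lambda>t. iter_pd is G t + iter_pd is H t)"
  using assms
proof (induction "is")
  case Nil
  then show ?case by simp
next
  case (Cons a "is")
  then have "iter_pd is (\<lambda>t. G t + H t) = (\<lambda>t. iter_pd is G t + iter_pd is H t)"
    by (metis dual_order.trans length_Cons less_Suc_eq set_subset_Cons)
  then show ?case
    using Cons.prems by (simp add: pd_add)
qed

lemma depends_only_upd_eq: "depends_only I G \<Longrightarrow> i \<notin> I \<Longrightarrow> G (t(i := s)) = G t"
  unfolding depends_only_def by simp

lemma pd_eq_0_if_depends_only: "depends_only I G \<Longrightarrow> i \<notin> I \<Longrightarrow> pd i G = (\<lambda>_. 0)"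
  by (simp add: pd_def depends_only_upd_eq fun_eq_iff)

lemma partial_differentiable_if_depends_only:
  "depends_only I G \<Longrightarrow> i \<notin> I \<Longrightarrow> partial_differentiable i G"
  by (simp add: partial_differentiable_def depends_only_upd_eq)

lemma depends_only_pd:
  assumes "depends_only I G"
  shows "depends_only I (pd i G)"
proof (cases "i \<in> I")
  case True
  show ?thesis
    unfolding depends_only_def
  proof (intro allI impI)
    fix t t' :: "nat \<Rightarrow> real"
    assume "\<forall>k\<in>I. t k = t' k"
    then have "(\<lambda>s. G (t(i := s))) = (\<lambda>s. G (t'(i := s)))" and "t i = t' i"
      using assms True unfolding depends_only_def by auto
    then show "pd i G t = pd i G t'"
      by (simp add: pd_def)
  qed
next
  case False
  then show ?thesis
    using pd_eq_0_if_depends_only[OF assms] by (simp add: depends_only_def)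
qed

lemma depends_only_iter_pd: "depends_only I G \<Longrightarrow> depends_only I (iter_pd is G)"
  by (induction "is") (simp_all add: depends_only_pd)

lemma iter_pd_eq_0_if_depends_only:
  assumes "depends_only I G" "\<not> set is \<subseteq> I"
  shows "iter_pd is G = (\<lambda>_. 0)"
  using assms(2)
proof (induction "is")
  case (Cons a "is")
  show ?case
  proof (cases "a \<in> I")
    case True
    with Cons have "iter_pd is G = (\<lambda>_. 0)" by simp
    then show ?thesis by (simp add: pd_def)
  next
    case False
    then show ?thesis
      by (simp add: pd_eq_0_if_depends_only[OF depends_only_iter_pd[OF assms(1)]])
  qed
qed simp

lemma coord_Ck_partial_differentiable:
  assumes "depends_only I G" "coord_Ck k I G" "length js < k"
  shows "partial_differentiable i (iter_pd js G)"
proof -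
  consider "set js \<subseteq> I" "i \<in> I" | "i \<notin> I" | "\<not> set js \<subseteq> I"
    by blast
  then show ?thesis
  proof cases
    case 1
    then show ?thesis
      using assms(2,3) unfolding coord_Ck_def partial_differentiable_def by auto
  next
    case 2
    then show ?thesis
      by (rule partial_differentiable_if_depends_only[OF depends_only_iter_pd[OF assms(1)]])
  next
    case 3
    then show ?thesis
      by (simp add: iter_pd_eq_0_if_depends_only[OF assms(1)] partial_differentiable_def)
  qed
qed

lemma mixed_difference_mvt:
  fixes f fx fxy :: "real \<Rightarrow> real \<Rightarrow> real"
  assumes fx: "\<And>x y. ((\<lambda>x. f x y) has_real_derivative fx x y) (at x)"
    and fxy: "\<And>x y. ((\<lambda>y. fx x y) has_real_derivative fxy x y) (at y)"
    and "0 < h"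
  obtains \<xi> \<eta> where "x < \<xi>" "\<xi> < x + h" "y < \<eta>" "\<eta> < y + h"
    "f (x + h) (y + h) - f (x + h) y - f x (y + h) + f x y = h * h * fxy \<xi> \<eta>"
proof -
  have "\<And>s. ((\<lambda>x. f x (y + h) - f x y) has_real_derivative fx s (y + h) - fx s y) (at s)"
    by (intro derivative_intros fx)
  then obtain \<xi> where \<xi>: "x < \<xi>" "\<xi> < x + h"
    and "(f (x + h) (y + h) - f (x + h) y) - (f x (y + h) - f x y) = h * (fx \<xi> (y + h) - fx \<xi> y)"
    using MVT2[of x "x + h" "\<lambda>x. f x (y + h) - f x y" "\<lambda>s. fx s (y + h) - fx s y"] \<open>0 < h\<close>
    by auto
  moreover obtain \<eta> where "y < \<eta>" "\<eta> < y + h" "fx \<xi> (y + h) - fx \<xi> y = h * fxy \<xi> \<eta>"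
    using MVT2[of y "y + h" "fx \<xi>" "fxy \<xi>"] fxy \<open>0 < h\<close> by auto
  ultimately show ?thesis
    using that by (simp add: algebra_simps)
qed

lemma LIMSEQ_squeeze_inverse_Suc:
  fixes a :: "nat \<Rightarrow> real"
  assumes "\<And>m. z < a m \<and> a m < z + 1 / Suc m"
  shows "a \<longlonglongrightarrow> z"
proof (rule tendsto_sandwich[where f = "\<lambda>_. z" and h = "\<lambda>m. z + 1 / Suc m"])
  show "\<forall>\<^sub>F m in sequentially. z \<le> a m" "\<forall>\<^sub>F m in sequentially. a m \<le> z + 1 / Suc m"
    using assms by (auto intro: always_eventually less_imp_le)
  have "(\<lambda>m. z + inverse (real (Suc m))) \<longlonglongrightarrow> z + 0"
    by (intro tendsto_add tendsto_const LIMSEQ_inverse_real_of_nat)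
  then show "(\<lambda>m. z + 1 / Suc m) \<longlonglongrightarrow> z"
    by (simp add: inverse_eq_divide)
qed simp

lemma mixed_partials_eq:
  fixes f fx fy fxy fyx :: "real \<Rightarrow> real \<Rightarrow> real" and x y :: real
  assumes fx: "\<And>x y. ((\<lambda>x. f x y) has_real_derivative fx x y) (at x)"
    and fy: "\<And>x y. ((\<lambda>y. f x y) has_real_derivative fy x y) (at y)"
    and fxy: "\<And>x y. ((\<lambda>y. fx x y) has_real_derivative fxy x y) (at y)"
    and fyx: "\<And>x y. ((\<lambda>x. fy x y) has_real_derivative fyx x y) (at x)"
    and cont_fxy: "isCont (\<lambda>z. fxy (fst z) (snd z)) (x, y)"
    and cont_fyx: "isCont (\<lambda>z. fyx (fst z) (snd z)) (x, y)"
  shows "fxy x y = fyx x y"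
proof -
  define h :: "nat \<Rightarrow> real" where "h m = 1 / Suc m" for m
  have h_pos: "0 < h m" for m
    by (simp add: h_def)
  have squeeze: "a \<longlonglongrightarrow> z" if "\<And>m. z < a m \<and> a m < z + h m" for a z
    using LIMSEQ_squeeze_inverse_Suc that unfolding h_def by blast
  define \<Delta> where "\<Delta> m = f (x + h m) (y + h m) - f (x + h m) y - f x (y + h m) + f x y" for m
  have "\<exists>\<xi> \<eta>. (x < \<xi> \<and> \<xi> < x + h m \<and> y < \<eta> \<and> \<eta> < y + h m) \<and> \<Delta> m = h m * h m * fxy \<xi> \<eta>"
    for m
    by (rule mixed_difference_mvt[OF fx fxy h_pos[of m], where x = x and y = y])
      (auto simp: \<Delta>_def)
  then obtain \<xi> \<eta> where \<xi>\<eta>: "\<And>m. x < \<xi> m \<and> \<xi> m < x + h m \<and> y < \<eta> m \<and> \<eta> m < y + h m"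
    and \<Delta>_xy: "\<And>m. \<Delta> m = h m * h m * fxy (\<xi> m) (\<eta> m)"
    by metis
  \<comment> \<open>the same second difference, with the mean value theorem applied in the other order\<close>
  have "\<exists>\<xi> \<eta>. (x < \<xi> \<and> \<xi> < x + h m \<and> y < \<eta> \<and> \<eta> < y + h m) \<and> \<Delta> m = h m * h m * fyx \<xi> \<eta>"
    for m
  proof -
    obtain \<eta> \<xi> where "y < \<eta>" "\<eta> < y + h m" "x < \<xi>" "\<xi> < x + h m"
      and "f (x + h m) (y + h m) - f x (y + h m) - f (x + h m) y + f x y = h m * h m * fyx \<xi> \<eta>"
      by (rule mixed_difference_mvt[where f = "\<lambda>y x. f x y", OF fy fyx h_pos[of m], where x = y and y = x])
    moreover from this(5) have "\<Delta> m = h m * h m * fyx \<xi> \<eta>"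
      unfolding \<Delta>_def by linarith
    ultimately show ?thesis
      by blast
  qed
  then obtain \<xi>' \<eta>' where \<xi>\<eta>': "\<And>m. x < \<xi>' m \<and> \<xi>' m < x + h m \<and> y < \<eta>' m \<and> \<eta>' m < y + h m"
    and \<Delta>_yx: "\<And>m. \<Delta> m = h m * h m * fyx (\<xi>' m) (\<eta>' m)"
    by metis
  have lim: "\<xi> \<longlonglongrightarrow> x" "\<eta> \<longlonglongrightarrow> y" "\<xi>' \<longlonglongrightarrow> x" "\<eta>' \<longlonglongrightarrow> y"
    using \<xi>\<eta> \<xi>\<eta>' by (auto intro!: squeeze)
  have "(\<lambda>m. fxy (\<xi> m) (\<eta> m)) \<longlonglongrightarrow> fxy x y" "(\<lambda>m. fyx (\<xi>' m) (\<eta>' m)) \<longlonglongrightarrow> fyx x y"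
    using isCont_tendsto_compose[OF cont_fxy tendsto_Pair[OF lim(1,2)]]
      isCont_tendsto_compose[OF cont_fyx tendsto_Pair[OF lim(3,4)]]
    by simp_all
  moreover have "fxy (\<xi> m) (\<eta> m) = fyx (\<xi>' m) (\<eta>' m)" for m
    using \<Delta>_xy[of m] \<Delta>_yx[of m] h_pos[of m] by simp
  ultimately show ?thesis
    using LIMSEQ_unique by simp
qed

lemma continuous_on_fun_upd2:
  "continuous_on UNIV (\<lambda>z :: real \<times> real. t(i := fst z, j := snd z))"
proof (rule continuous_on_coordinatewise_then_product)
  fix k
  show "continuous_on UNIV (\<lambda>z :: real \<times> real. (t(i := fst z, j := snd z)) k)"
    by (cases "k = j"; cases "k = i") (auto intro: continuous_intros)
qed

lemma pd_commute:
  assumes "i \<noteq> j"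
    and "partial_differentiable i G" "partial_differentiable j G"
    and "partial_differentiable j (pd i G)" "partial_differentiable i (pd j G)"
    and "continuous_on UNIV (pd j (pd i G))" "continuous_on UNIV (pd i (pd j G))"
  shows "pd j (pd i G) = pd i (pd j G)"
proof
  fix t
  let ?u = "\<lambda>x y :: real. t(i := x, j := y)"
  have upd: "(?u x y)(i := s) = ?u s y" "(?u x y)(j := s) = ?u x s" "?u x y i = x" "?u x y j = y"
    for x y s
    using \<open>i \<noteq> j\<close> by (simp_all add: fun_upd_twist)
  have deriv: "((\<lambda>s. H (?u s y)) has_real_derivative pd i H (?u x y)) (at x)"
    if "partial_differentiable i H" for H x y
    using partial_differentiable_has_partial_deriv[OF that, unfolded has_partial_deriv_def,
        rule_format, where t = "?u x y"]
    by (simp only: upd)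
  have deriv': "((\<lambda>s. H (?u x s)) has_real_derivative pd j H (?u x y)) (at y)"
    if "partial_differentiable j H" for H x y
    using partial_differentiable_has_partial_deriv[OF that, unfolded has_partial_deriv_def,
        rule_format, where t = "?u x y"]
    by (simp only: upd)
  have cont: "isCont (\<lambda>z. H (?u (fst z) (snd z))) (x, y)" if "continuous_on UNIV H" for H x y
    using continuous_on_compose2[OF that continuous_on_fun_upd2]
    by (simp add: continuous_on_eq_continuous_at)
  have "pd j (pd i G) (?u (t i) (t j)) = pd i (pd j G) (?u (t i) (t j))"
    by (rule mixed_partials_eq[OF deriv[OF assms(2)] deriv'[OF assms(3)] deriv'[OF assms(4)]
          deriv[OF assms(5)] cont[OF assms(6)] cont[OF assms(7)]])
  then show "pd j (pd i G) t = pd i (pd j G) t"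
    by simp
qed

definition sym_tensor :: "nat set \<Rightarrow> (nat \<Rightarrow> nat \<Rightarrow> nat \<Rightarrow> real) \<Rightarrow> bool" where
  "sym_tensor J C \<longleftrightarrow> (\<forall>a\<in>J. \<forall>b\<in>J. \<forall>c\<in>J. C a b c = C b a c \<and> C a b c = C a c b)"

lemma sym_tensorD:
  assumes "sym_tensor J C" "a \<in> J" "b \<in> J" "c \<in> J"
  shows "C b a c = C a b c" "C a c b = C a b c" "C b c a = C a b c" "C c a b = C a b c"
    "C c b a = C a b c"
  using assms unfolding sym_tensor_def by metis+

lemma sym_tensor_subset: "J \<subseteq> K \<Longrightarrow> sym_tensor K C \<Longrightarrow> sym_tensor J C"
  unfolding sym_tensor_def by blast

lemma sym_tensor_add:
  "sym_tensor J C \<Longrightarrow> sym_tensor J D \<Longrightarrow> sym_tensor J (\<lambda>a b c. C a b c + D a b c)"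
  unfolding sym_tensor_def by simp

lemma sym_tensor_third_pds:
  assumes dep: "depends_only I G" and smooth: "coord_Ck 3 I G"
  shows "sym_tensor UNIV (\<lambda>a b c. iter_pd [a, b, c] G t)"
proof -
  have diff: "partial_differentiable i (iter_pd js G)" if "length js < 3" for i js
    using coord_Ck_partial_differentiable[OF dep smooth that] .
  have cont: "continuous_on UNIV (iter_pd js G)" if "set js \<subseteq> I" "length js \<le> 3" for js
    using smooth that unfolding coord_Ck_def by blast
  have swap: "pd j (pd i H) = pd i (pd j H)"
    if "H = iter_pd js G" "length js < 2" "set js \<subseteq> I" "i \<in> I" "j \<in> I" "i \<noteq> j" for H i j js
    unfolding that(1)
  proof (intro pd_commute)
    show "partial_differentiable j (pd i (iter_pd js G))" "partial_differentiable i (pd j (iter_pd js G))"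
      using diff[of "i # js"] diff[of "j # js"] that(2) by simp_all
    show "continuous_on UNIV (pd j (pd i (iter_pd js G)))" "continuous_on UNIV (pd i (pd j (iter_pd js G)))"
      using cont[of "j # i # js"] cont[of "i # j # js"] that(2-5) by simp_all
  qed (use that diff in auto)
  have zero: "iter_pd js G t = 0" if "\<not> set js \<subseteq> I" for js
    using iter_pd_eq_0_if_depends_only[OF dep that] by simp
  show ?thesis
    unfolding sym_tensor_def
  proof (intro ballI conjI)
    fix a b c :: nat
    show "iter_pd [a, b, c] G t = iter_pd [b, a, c] G t"
      using swap[of "iter_pd [c] G" "[c]" b a] zero[of "[a, b, c]"] zero[of "[b, a, c]"]
      by (cases "a = b"; cases "a \<in> I \<and> b \<in> I \<and> c \<in> I") auto
    show "iter_pd [a, b, c] G t = iter_pd [a, c, b] G t"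
      using swap[of G "[]" c b] zero[of "[a, b, c]"] zero[of "[a, c, b]"]
      by (cases "b = c"; cases "a \<in> I \<and> b \<in> I \<and> c \<in> I") auto
  qed
qed

lemma if_zero_distribs:
  "y * (if P then x else 0) = (if P then y * x else (0::real))"
  "(if P then x else 0) * y = (if P then x * y else (0::real))"
  "(\<Sum>a\<in>A. if P then f a else 0) = (if P then sum f A else (0::real))"
  by simp_all

lemma has_partial_deriv_linear_form:
  assumes "finite J" "i \<in> J"
  shows "has_partial_deriv i (\<lambda>t. \<Sum>a\<in>J. v a * t a) (\<lambda>_. v i)"
proof -
  have "has_partial_deriv i (\<lambda>t. \<Sum>a\<in>J. v a * t a)
      (\<lambda>t. \<Sum>a\<in>J. 0 * t a + v a * (if a = i then 1 else 0))"
    by (intro has_partial_deriv_intros)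
  then show ?thesis using assms by (simp add: if_zero_distribs cong: if_cong)
qed

lemma has_partial_deriv_quadratic_form:
  assumes "finite J" "i \<in> J" and sym: "\<forall>a\<in>J. \<forall>b\<in>J. B a b = B b a"
  shows "has_partial_deriv i (\<lambda>t. \<Sum>a\<in>J. \<Sum>b\<in>J. B a b * t a * t b)
    (\<lambda>t. 2 * (\<Sum>b\<in>J. B i b * t b))"
proof -
  have "has_partial_deriv i (\<lambda>t. \<Sum>a\<in>J. \<Sum>b\<in>J. B a b * t a * t b)
      (\<lambda>t. \<Sum>a\<in>J. \<Sum>b\<in>J. (0 * t a + B a b * (if a = i then 1 else 0)) * t b
        + B a b * t a * (if b = i then 1 else 0))"
    by (intro has_partial_deriv_intros)
  moreover have "(\<Sum>a\<in>J. \<Sum>b\<in>J. (0 * t a + B a b * (if a = i then 1 else 0)) * t b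
        + B a b * t a * (if b = i then 1 else 0)) = 2 * (\<Sum>b\<in>J. B i b * t b)" for t :: "nat \<Rightarrow> real"
    using assms by (simp add: sum.distrib if_zero_distribs)
  ultimately show ?thesis by simp
qed

lemma has_partial_deriv_cubic_form:
  assumes "finite J" "i \<in> J" and sym: "sym_tensor J C"
  shows "has_partial_deriv i (\<lambda>t. \<Sum>a\<in>J. \<Sum>b\<in>J. \<Sum>c\<in>J. C a b c * t a * t b * t c)
    (\<lambda>t. 3 * (\<Sum>b\<in>J. \<Sum>c\<in>J. C i b c * t b * t c))"
proof -
  let ?\<delta> = "\<lambda>a. if a = i then 1 else 0 :: real"
  have "has_partial_deriv i (\<lambda>t. \<Sum>a\<in>J. \<Sum>b\<in>J. \<Sum>c\<in>J. C a b c * t a * t b * t c)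
      (\<lambda>t. \<Sum>a\<in>J. \<Sum>b\<in>J. \<Sum>c\<in>J. ((0 * t a + C a b c * ?\<delta> a) * t b
        + C a b c * t a * ?\<delta> b) * t c + C a b c * t a * t b * ?\<delta> c)"
    by (intro has_partial_deriv_intros)
  moreover have "(\<Sum>a\<in>J. \<Sum>b\<in>J. \<Sum>c\<in>J. ((0 * t a + C a b c * ?\<delta> a) * t b
        + C a b c * t a * ?\<delta> b) * t c + C a b c * t a * t b * ?\<delta> c)
      = 3 * (\<Sum>b\<in>J. \<Sum>c\<in>J. C i b c * t b * t c)" for t :: "nat \<Rightarrow> real"
  proof -
    have "(\<Sum>a\<in>J. \<Sum>b\<in>J. \<Sum>c\<in>J. C a b c * ?\<delta> a * t b * t c) = (\<Sum>b\<in>J. \<Sum>c\<in>J. C i b c * t b * t c)"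
      "(\<Sum>a\<in>J. \<Sum>b\<in>J. \<Sum>c\<in>J. C a b c * t a * ?\<delta> b * t c) = (\<Sum>b\<in>J. \<Sum>c\<in>J. C i b c * t b * t c)"
      "(\<Sum>a\<in>J. \<Sum>b\<in>J. \<Sum>c\<in>J. C a b c * t a * t b * ?\<delta> c) = (\<Sum>b\<in>J. \<Sum>c\<in>J. C i b c * t b * t c)"
      using assms by (simp_all add: if_zero_distribs sym_tensorD)
    then show ?thesis by (simp add: sum.distrib algebra_simps)
  qed
  ultimately show ?thesis by simp
qed

definition cubic_form :: "nat set \<Rightarrow> (nat \<Rightarrow> nat \<Rightarrow> nat \<Rightarrow> real) \<Rightarrow> (nat \<Rightarrow> real) \<Rightarrow> real" where
  "cubic_form J C t = (\<Sum>a\<in>J. \<Sum>b\<in>J. \<Sum>c\<in>J. C a b c * t a * t b * t c) / 6"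

lemma has_partial_derivs_cubic_form:
  assumes "finite J" "sym_tensor J C"
  shows "k \<in> J \<Longrightarrow>
      has_partial_deriv k (cubic_form J C) (\<lambda>t. (\<Sum>a\<in>J. \<Sum>b\<in>J. C k a b * t a * t b) / 2)"
    and "j \<in> J \<Longrightarrow> k \<in> J \<Longrightarrow>
      has_partial_deriv j (\<lambda>t. (\<Sum>a\<in>J. \<Sum>b\<in>J. C k a b * t a * t b) / 2) (\<lambda>t. \<Sum>a\<in>J. C k j a * t a)"
    and "i \<in> J \<Longrightarrow> j \<in> J \<Longrightarrow> k \<in> J \<Longrightarrow>
      has_partial_deriv i (\<lambda>t. \<Sum>a\<in>J. C k j a * t a) (\<lambda>_. C i j k)"
proof -
  show "has_partial_deriv k (cubic_form J C) (\<lambda>t. (\<Sum>a\<in>J. \<Sum>b\<in>J. C k a b * t a * t b) / 2)"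
    if "k \<in> J"
    using has_partial_deriv_divide_const[OF has_partial_deriv_cubic_form[OF assms(1) that assms(2)], of 6]
    by (simp add: cubic_form_def[abs_def])
  show "has_partial_deriv j (\<lambda>t. (\<Sum>a\<in>J. \<Sum>b\<in>J. C k a b * t a * t b) / 2) (\<lambda>t. \<Sum>a\<in>J. C k j a * t a)"
    if "j \<in> J" "k \<in> J"
  proof -
    have "\<forall>a\<in>J. \<forall>b\<in>J. C k a b = C k b a"
      using assms(2) that(2) sym_tensorD(2) by blast
    from has_partial_deriv_divide_const[OF has_partial_deriv_quadratic_form[OF assms(1) that(1) this], of 2]
    show ?thesis by simp
  qed
  show "has_partial_deriv i (\<lambda>t. \<Sum>a\<in>J. C k j a * t a) (\<lambda>_. C i j k)"
    if "i \<in> J" "j \<in> J" "k \<in> J"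
    using has_partial_deriv_linear_form[OF assms(1) that(1), of "C k j"] sym_tensorD(5)[OF assms(2) that]
    by simp
qed

lemma iter_pd_cubic_form:
  assumes "finite J" "sym_tensor J C" "j \<in> J" "k \<in> J"
  shows "iter_pd [k] (cubic_form J C) = (\<lambda>t. (\<Sum>a\<in>J. \<Sum>b\<in>J. C k a b * t a * t b) / 2)"
    and "iter_pd [j, k] (cubic_form J C) = (\<lambda>t. \<Sum>a\<in>J. C k j a * t a)"
    and "i \<in> J \<Longrightarrow> iter_pd [i, j, k] (cubic_form J C) = (\<lambda>_. C i j k)"
proof -
  note derivs = has_partial_derivs_cubic_form[OF assms(1,2)]
  show 1: "iter_pd [k] (cubic_form J C) = (\<lambda>t. (\<Sum>a\<in>J. \<Sum>b\<in>J. C k a b * t a * t b) / 2)"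
    using has_partial_deriv_imp_pd[OF derivs(1)[OF assms(4)]] by simp
  show 2: "iter_pd [j, k] (cubic_form J C) = (\<lambda>t. \<Sum>a\<in>J. C k j a * t a)"
    using has_partial_deriv_imp_pd[OF derivs(2)[OF assms(3,4)]] 1 by simp
  show "iter_pd [i, j, k] (cubic_form J C) = (\<lambda>_. C i j k)" if "i \<in> J"
    using has_partial_deriv_imp_pd[OF derivs(3)[OF that assms(3,4)]] 2 by simp
qed

lemma partial_differentiable_iter_pd_cubic_form:
  assumes "finite J" "sym_tensor J C" "set js \<subseteq> J" "length js < 3" "i \<in> J"
  shows "partial_differentiable i (iter_pd js (cubic_form J C))"
proof -
  note derivs = has_partial_derivs_cubic_form[OF assms(1,2)]
  consider "js = []" | k where "js = [k]" | j k where "js = [j, k]"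
    using assms(4) by (cases js; cases "tl js"; auto)
  then show ?thesis
  proof cases
    case 1
    then show ?thesis
      using derivs(1)[OF assms(5)] by (simp add: has_partial_deriv_imp_partial_differentiable)
  next
    case (2 k)
    then show ?thesis
      using assms(3) derivs(2)[OF assms(5), of k] iter_pd_cubic_form(1)[OF assms(1,2,5), of k]
      by (simp add: has_partial_deriv_imp_partial_differentiable)
  next
    case (3 j k)
    then show ?thesis
      using assms(3) derivs(3)[OF assms(5), of j k] iter_pd_cubic_form(2)[OF assms(1,2), of j k]
      by (simp add: has_partial_deriv_imp_partial_differentiable)
  qed
qed

lemma sum_split_ends: "(\<Sum>i\<in>{0..(n::nat)+1}. f i) = f 0 + (\<Sum>i\<in>{1..n}. f i) + (f (n+1) :: 'a :: comm_monoid_add)"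
proof -
  have "{0..n+1} = insert 0 (insert (n+1) {1..n})"
    by auto
  then show ?thesis
    by (simp add: add_ac)
qed

lemma sum_mult_sum_swap:
  fixes a :: "nat \<Rightarrow> real"
  shows "(\<Sum>k\<in>J. a k * (\<Sum>l\<in>L. b k l * c l)) = (\<Sum>l\<in>L. (\<Sum>k\<in>J. a k * b k l) * c l)"
  by (simp add: sum_distrib_left sum_distrib_right mult.assoc sum.swap[of _ J L])

lemma sum_product_reorder:
  fixes A B :: "nat \<Rightarrow> nat \<Rightarrow> real"
  shows "(\<Sum>k\<in>J. (\<Sum>p\<in>J. A k p) * (\<Sum>q\<in>J. B k q)) = (\<Sum>q\<in>J. \<Sum>p\<in>J. \<Sum>k\<in>J. A k p * B k q)"
proof -
  have "(\<Sum>k\<in>J. (\<Sum>p\<in>J. A k p) * (\<Sum>q\<in>J. B k q)) = (\<Sum>k\<in>J. \<Sum>p\<in>J. \<Sum>q\<in>J. A k p * B k q)"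
    by (simp add: sum_product)
  also have "\<dots> = (\<Sum>p\<in>J. \<Sum>k\<in>J. \<Sum>q\<in>J. A k p * B k q)"
    by (rule sum.swap)
  also have "\<dots> = (\<Sum>p\<in>J. \<Sum>q\<in>J. \<Sum>k\<in>J. A k p * B k q)"
    by (intro sum.cong refl sum.swap)
  also have "\<dots> = (\<Sum>q\<in>J. \<Sum>p\<in>J. \<Sum>k\<in>J. A k p * B k q)"
    by (rule sum.swap)
  finally show ?thesis .
qed

lemma sum_bilinear_commute:
  fixes g :: "nat \<Rightarrow> nat \<Rightarrow> real"
  assumes "\<forall>l\<in>J. \<forall>m\<in>J. g l m = g m l"
  shows "(\<Sum>l\<in>J. \<Sum>m\<in>J. X l * g l m * Y m) = (\<Sum>l\<in>J. \<Sum>m\<in>J. Y l * g l m * X m)"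
proof -
  have "(\<Sum>l\<in>J. \<Sum>m\<in>J. X l * g l m * Y m) = (\<Sum>m\<in>J. \<Sum>l\<in>J. X l * g l m * Y m)"
    by (rule sum.swap)
  also have "\<dots> = (\<Sum>l\<in>J. \<Sum>m\<in>J. Y l * g l m * X m)"
    using assms by (intro sum.cong refl) (simp add: ac_simps)
  finally show ?thesis .
qed

lemma right_inverse_imp_left_inverse:
  fixes A B :: "nat \<Rightarrow> nat \<Rightarrow> real"
  assumes "\<forall>k\<in>{0..<d}. \<forall>m\<in>{0..<d}. (\<Sum>l\<in>{0..<d}. A k l * B l m) = (if k = m then 1 else 0)"
  shows "\<forall>k\<in>{0..<d}. \<forall>m\<in>{0..<d}. (\<Sum>l\<in>{0..<d}. B k l * A l m) = (if k = m then 1 else 0)"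
proof -
  define A' where "A' = mat d d (\<lambda>(i,j). A i j)"
  define B' where "B' = mat d d (\<lambda>(i,j). B i j)"
  have cA: "A' \<in> carrier_mat d d" and cB: "B' \<in> carrier_mat d d" unfolding A'_def B'_def by auto
  have "A' * B' = 1\<^sub>m d"
  proof (rule eq_matI)
    fix i j assume "i < dim_row (1\<^sub>m d)" "j < dim_col (1\<^sub>m d)"
    then have i: "i < d" and j: "j < d" by auto
    have "(A' * B') $$ (i,j) = (\<Sum>l\<in>{0..<d}. A i l * B l j)"
      using i j unfolding A'_def B'_def by (simp add: scalar_prod_def)
    also have "\<dots> = 1\<^sub>m d $$ (i,j)" using assms i j by simp
    finally show "(A' * B') $$ (i,j) = 1\<^sub>m d $$ (i,j)" .
  qed (auto simp: A'_def B'_def)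
  from mat_mult_left_right_inverse[OF cA cB this] have BA: "B' * A' = 1\<^sub>m d" .
  show ?thesis
  proof (intro ballI)
    fix k m assume k: "k \<in> {0..<d}" and m: "m \<in> {0..<d}"
    have "(\<Sum>l\<in>{0..<d}. B k l * A l m) = (B' * A') $$ (k,m)"
      using k m unfolding A'_def B'_def by (simp add: scalar_prod_def)
    also have "\<dots> = (if k = m then 1 else 0)" using k m by (simp add: BA)
    finally show "(\<Sum>l\<in>{0..<d}. B k l * A l m) = (if k = m then 1 else 0)" .
  qed
qed

definition wdvv :: "nat set \<Rightarrow> (nat \<Rightarrow> nat \<Rightarrow> real) \<Rightarrow> (nat \<Rightarrow> nat \<Rightarrow> nat \<Rightarrow> real) \<Rightarrow> bool" where
  "wdvv J g T \<longleftrightarrow> (\<forall>a\<in>J. \<forall>b\<in>J. \<forall>c\<in>J. \<forall>d\<in>J.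
     (\<Sum>l\<in>J. \<Sum>m\<in>J. T a b l * g l m * T c d m) = (\<Sum>l\<in>J. \<Sum>m\<in>J. T c b l * g l m * T a d m))"

lemma assoc_eqs_iff_wdvv: "assoc_eqs J g G \<longleftrightarrow> (\<forall>t. wdvv J g (\<lambda>a b c. iter_pd [a, b, c] G t))"
  unfolding assoc_eqs_def wdvv_def ..

lemma wdvv_imp_assoc:
  fixes g :: "nat \<Rightarrow> nat \<Rightarrow> real"
  assumes g_sym: "\<forall>l\<in>J. \<forall>m\<in>J. g l m = g m l"
    and T_sym: "sym_tensor J T" and "wdvv J g T"
    and "i \<in> J" "j \<in> J" "l \<in> J" "m \<in> J"
  shows "(\<Sum>k\<in>J. (\<Sum>p\<in>J. g k p * T p i j) * (\<Sum>q\<in>J. g m q * T q k l))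
       = (\<Sum>k\<in>J. (\<Sum>p\<in>J. g k p * T p j l) * (\<Sum>q\<in>J. g m q * T q i k))"
proof -
  define W where "W a b c d = (\<Sum>p\<in>J. \<Sum>k\<in>J. T a b p * g p k * T c d k)" for a b c d
  have expand: "(\<Sum>k\<in>J. (\<Sum>p\<in>J. g k p * T p a b) * (\<Sum>q\<in>J. g m q * T q k c))
      = (\<Sum>q\<in>J. g m q * W a b c q)" if "a \<in> J" "b \<in> J" "c \<in> J" for a b c
  proof -
    have "(\<Sum>k\<in>J. (\<Sum>p\<in>J. g k p * T p a b) * (\<Sum>q\<in>J. g m q * T q k c))
        = (\<Sum>q\<in>J. \<Sum>p\<in>J. \<Sum>k\<in>J. g m q * (T a b p * g p k * T c q k))"
      unfolding sum_product_reorder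
    proof (intro sum.cong refl)
      fix q p k assume "q \<in> J" "p \<in> J" "k \<in> J"
      then show "g k p * T p a b * (g m q * T q k c) = g m q * (T a b p * g p k * T c q k)"
        using g_sym T_sym that by (simp add: sym_tensorD)
    qed
    then show ?thesis
      by (simp add: W_def sum_distrib_left)
  qed
  have W_swap1: "W a b c d = W b a c d" if "a \<in> J" "b \<in> J" for a b c d
    unfolding W_def using T_sym that by (simp add: sym_tensorD cong: sum.cong)
  have W_swap_pairs: "W a b c d = W c d a b" for a b c d
    unfolding W_def using sum_bilinear_commute[OF g_sym] .
  have W_wdvv: "W a b c d = W c b a d" if "a \<in> J" "b \<in> J" "c \<in> J" "d \<in> J" for a b c d
    using \<open>wdvv J g T\<close> that unfolding wdvv_def W_def by blast
  have "W i j l q = W j l i q" if "q \<in> J" for q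
  proof -
    have "W i j l q = W l q j i"
      using W_swap1[of i j l q] W_swap_pairs[of j i l q] that assms by simp
    also have "\<dots> = W q l j i"
      using W_swap1[of l q j i] that assms by simp
    also have "\<dots> = W j l q i"
      using W_wdvv[of q l j i] that assms by simp
    also have "\<dots> = W j l i q"
      using W_swap_pairs[of j l q i] W_swap1[of q i j l] W_swap_pairs[of i q j l] that assms by simp
    finally show ?thesis .
  qed
  then have "(\<Sum>q\<in>J. g m q * W i j l q) = (\<Sum>q\<in>J. g m q * W j l i q)"
    by simp
  moreover have "(\<Sum>q\<in>J. g m q * T q k i) = (\<Sum>q\<in>J. g m q * T q i k)" if "k \<in> J" for k
    using T_sym \<open>i \<in> J\<close> that by (intro sum.cong refl) (simp add: sym_tensorD)
  ultimately show ?thesis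
    using expand[of i j l] expand[of j l i] assms by simp
qed

lemma eta_tilde_sym:
  assumes "\<forall>a\<in>{1..n}. \<forall>b\<in>{1..n}. eta a b = eta b a" "x \<in> {0..n+1}" "y \<in> {0..n+1}"
  shows "eta_tilde n eta x y = eta_tilde n eta y x"
  using assms by (auto simp: eta_tilde_def)

definition ftilde_tensor :: "nat \<Rightarrow> (nat \<Rightarrow> nat \<Rightarrow> real) \<Rightarrow> nat \<Rightarrow> nat \<Rightarrow> nat \<Rightarrow> real" where
  "ftilde_tensor n eta a b c =
     (if a = 0 then eta_tilde n eta b c
      else if b = 0 then eta_tilde n eta a c
      else if c = 0 then eta_tilde n eta a b else 0)"

lemma Ftilde_eq_cubic_form:
  "Ftilde n eta F t = cubic_form {0..n+1} (ftilde_tensor n eta) t + F t"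
proof -
  let ?Q = "\<Sum>a\<in>{1..n}. \<Sum>b\<in>{1..n}. eta a b * t a * t b"
  have "(\<Sum>a\<in>{0..n+1}. \<Sum>b\<in>{0..n+1}. \<Sum>c\<in>{0..n+1}. ftilde_tensor n eta a b c * t a * t b * t c)
      = 3 * (t 0 * (t 0 * t (n+1))) + (\<Sum>b\<in>{1..n}. \<Sum>c\<in>{1..n}. eta b c * t 0 * t b * t c)
        + (\<Sum>a\<in>{1..n}. (\<Sum>c\<in>{1..n}. eta a c * t a * t 0 * t c) + (\<Sum>b\<in>{1..n}. eta a b * t a * t b * t 0))"
    unfolding sum_split_ends by (simp add: ftilde_tensor_def eta_tilde_def)
  also have "\<dots> = 3 * (?Q * t 0 + (t 0)^2 * t (n+1))"
  proof -
    have "(\<Sum>b\<in>{1..n}. \<Sum>c\<in>{1..n}. eta b c * t 0 * t b * t c) = t 0 * ?Q"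
      by (simp add: sum_distrib_left mult_ac)
    moreover have "(\<Sum>a\<in>{1..n}. (\<Sum>c\<in>{1..n}. eta a c * t a * t 0 * t c) + (\<Sum>b\<in>{1..n}. eta a b * t a * t b * t 0))
        = t 0 * ?Q + t 0 * ?Q"
      by (simp add: sum.distrib sum_distrib_left mult_ac)
    ultimately show ?thesis
      by (simp add: power2_eq_square algebra_simps)
  qed
  finally show ?thesis
    by (simp add: Ftilde_def cubic_form_def)
qed

lemma sym_tensor_ftilde_tensor:
  assumes "\<forall>a\<in>{1..n}. \<forall>b\<in>{1..n}. eta a b = eta b a"
  shows "sym_tensor {0..n+1} (ftilde_tensor n eta)"
  using eta_tilde_sym[OF assms] unfolding sym_tensor_def ftilde_tensor_def by auto

lemma third_pd_Ftilde:
  assumes eta_sym: "\<forall>a\<in>{1..n}. \<forall>b\<in>{1..n}. eta a b = eta b a"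
    and F_vars: "depends_only {1..n} F" and F_smooth: "coord_Ck 3 {1..n} F"
    and "a \<in> {0..n+1}" "b \<in> {0..n+1}" "c \<in> {0..n+1}"
  shows "iter_pd [a, b, c] (Ftilde n eta F) t = ftilde_tensor n eta a b c + iter_pd [a, b, c] F t"
proof -
  let ?J = "{0..n+1}"
  have "iter_pd [a, b, c] (\<lambda>t. cubic_form ?J (ftilde_tensor n eta) t + F t)
      = (\<lambda>t. iter_pd [a, b, c] (cubic_form ?J (ftilde_tensor n eta)) t + iter_pd [a, b, c] F t)"
    using assms(4-6) sym_tensor_ftilde_tensor[OF eta_sym]
    by (intro iter_pd_add[where J = ?J] partial_differentiable_iter_pd_cubic_form
        coord_Ck_partial_differentiable[OF F_vars F_smooth]) auto
  then show ?thesis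
    using iter_pd_cubic_form(3)[OF _ sym_tensor_ftilde_tensor[OF eta_sym]] assms(4-6)
    by (simp add: Ftilde_eq_cubic_form[abs_def])
qed

lemma third_pds_Ftilde:
  assumes eta_sym: "\<forall>a\<in>{1..n}. \<forall>b\<in>{1..n}. eta a b = eta b a"
    and F_vars: "depends_only {1..n} F" and F_smooth: "coord_Ck 3 {1..n} F"
  shows "sym_tensor {0..n+1} (\<lambda>a b c. iter_pd [a, b, c] (Ftilde n eta F) t)"
    and "\<forall>x\<in>{0..n+1}. \<forall>y\<in>{0..n+1}. iter_pd [0, x, y] (Ftilde n eta F) t = eta_tilde n eta x y"
    and "\<forall>x\<in>{0..n+1}. \<forall>y\<in>{0..n+1}.
      iter_pd [n+1, x, y] (Ftilde n eta F) t = (if x = 0 \<and> y = 0 then 1 else 0)"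
    and "\<forall>a\<in>{1..n}. \<forall>b\<in>{1..n}. \<forall>c\<in>{1..n}. iter_pd [a, b, c] (Ftilde n eta F) t = iter_pd [a, b, c] F t"
proof -
  let ?J = "{0..n+1}"
  note T_eq = third_pd_Ftilde[OF eta_sym F_vars F_smooth]
  have F_outside: "iter_pd [a, b, c] F t = 0" if "a \<notin> {1..n}" for a b c
  proof -
    have "\<not> set [a, b, c] \<subseteq> {1..n}"
      using that by auto
    from iter_pd_eq_0_if_depends_only[OF F_vars this] show ?thesis
      by simp
  qed
  have "sym_tensor ?J (\<lambda>a b c. ftilde_tensor n eta a b c + iter_pd [a, b, c] F t)"
    using sym_tensor_ftilde_tensor[OF eta_sym] sym_tensor_third_pds[OF F_vars F_smooth]
    by (intro sym_tensor_add) (auto intro: sym_tensor_subset)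
  then show "sym_tensor ?J (\<lambda>a b c. iter_pd [a, b, c] (Ftilde n eta F) t)"
    unfolding sym_tensor_def by (simp add: T_eq del: iter_pd.simps)
  show "\<forall>x\<in>?J. \<forall>y\<in>?J. iter_pd [0, x, y] (Ftilde n eta F) t = eta_tilde n eta x y"
    by (simp add: T_eq F_outside ftilde_tensor_def del: iter_pd.simps)
  show "\<forall>x\<in>?J. \<forall>y\<in>?J. iter_pd [n+1, x, y] (Ftilde n eta F) t = (if x = 0 \<and> y = 0 then 1 else 0)"
    by (simp add: T_eq F_outside ftilde_tensor_def eta_tilde_def del: iter_pd.simps)
  show "\<forall>a\<in>{1..n}. \<forall>b\<in>{1..n}. \<forall>c\<in>{1..n}.
      iter_pd [a, b, c] (Ftilde n eta F) t = iter_pd [a, b, c] F t"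
    by (simp add: T_eq ftilde_tensor_def del: iter_pd.simps)
qed

context
  fixes n :: nat and eta eta_inv M :: "nat \<Rightarrow> nat \<Rightarrow> real"
  assumes eta_sym: "\<forall>a\<in>{1..n}. \<forall>b\<in>{1..n}. eta a b = eta b a"
    and eta_inv: "\<forall>a\<in>{1..n}. \<forall>b\<in>{1..n}. (\<Sum>l\<in>{1..n}. eta a l * eta_inv l b) = (if a = b then 1 else 0)"
    and eta_tilde_M: "\<forall>k\<in>{0..n+1}. \<forall>m\<in>{0..n+1}.
      (\<Sum>l\<in>{0..n+1}. eta_tilde n eta k l * M l m) = (if k = m then 1 else 0)"
begin

lemma M_eta_tilde:
  assumes "k \<in> {0..n+1}" "m \<in> {0..n+1}"
  shows "(\<Sum>l\<in>{0..n+1}. M k l * eta_tilde n eta l m) = (if k = m then 1 else 0)"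
proof -
  have "{0..n+1} = {0..<n+2}"
    by auto
  then show ?thesis
    using right_inverse_imp_left_inverse[of "n+2" "eta_tilde n eta" M] eta_tilde_M assms by simp
qed

lemma M_sym:
  assumes x: "x \<in> {0..n+1}" and y: "y \<in> {0..n+1}"
  shows "M x y = M y x"
proof -
  let ?J = "{0..n+1}" and ?E = "eta_tilde n eta"
  have E_M_transposed: "(\<Sum>l\<in>?J. ?E k l * M y l) = (if k = y then 1 else 0)" if k: "k \<in> ?J" for k
  proof -
    have "(\<Sum>l\<in>?J. ?E k l * M y l) = (\<Sum>l\<in>?J. M y l * ?E l k)"
    proof (rule sum.cong)
      fix l assume "l \<in> ?J"
      then show "?E k l * M y l = M y l * ?E l k"
        using eta_tilde_sym[OF eta_sym k] by simp
    qed simp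
    then show ?thesis
      using M_eta_tilde[OF y k] by auto
  qed
  have "M x y = (\<Sum>k\<in>?J. M x k * (if k = y then 1 else 0))"
    using y by (simp add: if_zero_distribs)
  also have "\<dots> = (\<Sum>k\<in>?J. M x k * (\<Sum>l\<in>?J. ?E k l * M y l))"
    by (intro sum.cong refl) (simp only: E_M_transposed)
  also have "\<dots> = (\<Sum>l\<in>?J. (\<Sum>k\<in>?J. M x k * ?E k l) * M y l)"
    by (rule sum_mult_sum_swap)
  also have "\<dots> = (\<Sum>l\<in>?J. (if x = l then 1 else 0) * M y l)"
    by (intro sum.cong refl) (simp only: M_eta_tilde[OF x])
  also have "\<dots> = M y x"
    using x by (simp add: if_zero_distribs)
  finally show ?thesis .
qed

lemma M_0:
  assumes "m \<in> {0..n+1}"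
  shows "M 0 m = (if m = n+1 then 1 else 0)"
proof -
  have "(\<Sum>l\<in>{0..n+1}. eta_tilde n eta (n+1) l * M l m) = M 0 m"
    unfolding sum_split_ends by (simp add: eta_tilde_def)
  then show ?thesis
    using eta_tilde_M assms by force
qed

lemma M_last:
  assumes "m \<in> {0..n+1}"
  shows "M (n+1) m = (if m = 0 then 1 else 0)"
proof -
  have "(\<Sum>l\<in>{0..n+1}. eta_tilde n eta 0 l * M l m) = M (n+1) m"
    unfolding sum_split_ends by (simp add: eta_tilde_def)
  then show ?thesis
    using eta_tilde_M assms by force
qed

lemma M_inner:
  assumes x: "x \<in> {1..n}" and y: "y \<in> {1..n}"
  shows "M x y = eta_inv x y"
proof -
  let ?I = "{1..n}"
  have M_eta: "(\<Sum>l\<in>?I. M x l * eta l k) = (if x = k then 1 else 0)" if k: "k \<in> ?I" for k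
  proof -
    have "(\<Sum>l\<in>{0..n+1}. M x l * eta_tilde n eta l k) = (\<Sum>l\<in>?I. M x l * eta l k)"
      unfolding sum_split_ends using k by (auto simp: eta_tilde_def intro!: sum.cong)
    then show ?thesis
      using M_eta_tilde[of x k] x k by simp
  qed
  have "eta_inv x y = (\<Sum>k\<in>?I. (if x = k then 1 else 0) * eta_inv k y)"
    using x by (simp add: if_zero_distribs)
  also have "\<dots> = (\<Sum>k\<in>?I. (\<Sum>l\<in>?I. M x l * eta l k) * eta_inv k y)"
    by (intro sum.cong refl) (simp only: M_eta)
  also have "\<dots> = (\<Sum>l\<in>?I. M x l * (\<Sum>k\<in>?I. eta l k * eta_inv k y))"
    by (rule sum_mult_sum_swap[symmetric])
  also have "\<dots> = (\<Sum>l\<in>?I. M x l * (if l = y then 1 else 0))"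
    using eta_inv y by (intro sum.cong refl) simp
  also have "\<dots> = M x y"
    using y by (simp add: if_zero_distribs)
  finally show ?thesis
    by simp
qed

lemma sum_M_split:
  "(\<Sum>l\<in>{0..n+1}. \<Sum>m\<in>{0..n+1}. X l * M l m * Y m)
    = X 0 * Y (n+1) + (\<Sum>l\<in>{1..n}. \<Sum>m\<in>{1..n}. X l * eta_inv l m * Y m) + X (n+1) * Y 0"
proof -
  have inner: "(\<Sum>m\<in>{0..n+1}. X l * M l m * Y m) = (\<Sum>m\<in>{1..n}. X l * eta_inv l m * Y m)"
    if l: "l \<in> {1..n}" for l
  proof -
    have "M l 0 = 0" "M l (n+1) = 0"
      using M_sym[of l 0] M_sym[of l "n+1"] M_0[of l] M_last[of l] l by auto
    then show ?thesis
      unfolding sum_split_ends using l by (auto simp: M_inner intro!: sum.cong)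
  qed
  have first: "(\<Sum>m\<in>{0..n+1}. X 0 * M 0 m * Y m) = X 0 * Y (n+1)"
    unfolding sum_split_ends by (simp add: M_0)
  have last: "(\<Sum>m\<in>{0..n+1}. X (n+1) * M (n+1) m * Y m) = X (n+1) * Y 0"
    unfolding sum_split_ends by (simp add: M_last[simplified])
  have "(\<Sum>l\<in>{0..n+1}. \<Sum>m\<in>{0..n+1}. X l * M l m * Y m)
      = (\<Sum>m\<in>{0..n+1}. X 0 * M 0 m * Y m) + (\<Sum>l\<in>{1..n}. \<Sum>m\<in>{0..n+1}. X l * M l m * Y m)
        + (\<Sum>m\<in>{0..n+1}. X (n+1) * M (n+1) m * Y m)"
    by (rule sum_split_ends)
  also have "(\<Sum>l\<in>{1..n}. \<Sum>m\<in>{0..n+1}. X l * M l m * Y m)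
      = (\<Sum>l\<in>{1..n}. \<Sum>m\<in>{1..n}. X l * eta_inv l m * Y m)"
    by (rule sum.cong[OF refl inner])
  finally show ?thesis
    unfolding first last .
qed

lemma sum_M_unit:
  assumes a: "a \<in> {0..n+1}" and X: "\<forall>l\<in>{0..n+1}. X l = eta_tilde n eta a l"
  shows "(\<Sum>l\<in>{0..n+1}. \<Sum>m\<in>{0..n+1}. X l * M l m * Y m) = Y a"
proof -
  let ?J = "{0..n+1}"
  have "(\<Sum>l\<in>?J. \<Sum>m\<in>?J. X l * M l m * Y m) = (\<Sum>l\<in>?J. X l * (\<Sum>m\<in>?J. M l m * Y m))"
    by (simp add: sum_distrib_left mult.assoc del: sum.cl_ivl_Suc)
  also have "\<dots> = (\<Sum>l\<in>?J. eta_tilde n eta a l * (\<Sum>m\<in>?J. M l m * Y m))"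
    using X by (intro sum.cong refl) simp
  also have "\<dots> = (\<Sum>m\<in>?J. (\<Sum>l\<in>?J. eta_tilde n eta a l * M l m) * Y m)"
    by (rule sum_mult_sum_swap)
  also have "\<dots> = (\<Sum>m\<in>?J. (if a = m then 1 else 0) * Y m)"
    using eta_tilde_M a by (intro sum.cong refl) simp
  also have "\<dots> = Y a"
    using a by (simp add: if_zero_distribs)
  finally show ?thesis .
qed

lemma sum_M_bilinear_commute:
  "(\<Sum>l\<in>{0..n+1}. \<Sum>m\<in>{0..n+1}. X l * M l m * Y m)
    = (\<Sum>l\<in>{0..n+1}. \<Sum>m\<in>{0..n+1}. Y l * M l m * X m)"
  using M_sym by (intro sum_bilinear_commute) blast

lemma wdvv_with_unit_index:
  assumes T_sym: "sym_tensor {0..n+1} T"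
    and T_0: "\<forall>x\<in>{0..n+1}. \<forall>y\<in>{0..n+1}. T 0 x y = eta_tilde n eta x y"
    and abcd: "a \<in> {0..n+1}" "b \<in> {0..n+1}" "c \<in> {0..n+1}" "d \<in> {0..n+1}"
    and "0 \<in> {a, b, c, d}"
  shows "(\<Sum>l\<in>{0..n+1}. \<Sum>m\<in>{0..n+1}. T a b l * M l m * T c d m)
    = (\<Sum>l\<in>{0..n+1}. \<Sum>m\<in>{0..n+1}. T c b l * M l m * T a d m)"
proof -
  let ?J = "{0..n+1}"
  let ?P = "\<lambda>X Y. \<Sum>l\<in>?J. \<Sum>m\<in>?J. X l * M l m * Y m"
  have T_unit: "T x 0 l = eta_tilde n eta x l" "T 0 x l = eta_tilde n eta x l"
    if "x \<in> ?J" "l \<in> ?J" for x l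
    using T_0 sym_tensorD(1)[OF T_sym _ that] that by auto
  have unit: "?P (T x 0) Y = Y x" "?P (T 0 x) Y = Y x" "?P Y (T x 0) = Y x" "?P Y (T 0 x) = Y x"
    if "x \<in> ?J" for x Y
    using sum_M_unit[OF that] sum_M_bilinear_commute[of Y] T_unit that
    by (auto simp del: sum.cl_ivl_Suc)
  consider "b = 0" | "d = 0" | "a = 0" | "c = 0"
    using \<open>0 \<in> {a, b, c, d}\<close> by blast
  then show ?thesis
  proof cases
    case 1
    then show ?thesis
      using unit(1)[OF abcd(1)] unit(1)[OF abcd(3)] sym_tensorD(5)[OF T_sym abcd(1,4,3)] by simp
  next
    case 2
    then show ?thesis
      using unit(3)[OF abcd(3)] unit(3)[OF abcd(1)] sym_tensorD(5)[OF T_sym abcd(1,2,3)] by simp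
  next
    case 3
    then show ?thesis
      using unit(2)[OF abcd(2)] unit(4)[OF abcd(4)] sym_tensorD(2)[OF T_sym abcd(3,2,4)] by simp
  next
    case 4
    then show ?thesis
      using unit(4)[OF abcd(4)] unit(2)[OF abcd(2)] sym_tensorD(2)[OF T_sym abcd(1,2,4)] by simp
  qed
qed

lemma wdvv_extension:
  assumes T_sym: "sym_tensor {0..n+1} T"
    and T_0: "\<forall>x\<in>{0..n+1}. \<forall>y\<in>{0..n+1}. T 0 x y = eta_tilde n eta x y"
    and T_last: "\<forall>x\<in>{0..n+1}. \<forall>y\<in>{0..n+1}. T (n+1) x y = (if x = 0 \<and> y = 0 then 1 else 0)"
    and T_wdvv: "wdvv {1..n} eta_inv T"
  shows "wdvv {0..n+1} M T"
  unfolding wdvv_def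
proof (intro ballI)
  let ?J = "{0..n+1}"
  let ?P = "\<lambda>X Y. \<Sum>l\<in>?J. \<Sum>m\<in>?J. X l * M l m * Y m"
  fix a b c d assume abcd: "a \<in> ?J" "b \<in> ?J" "c \<in> ?J" "d \<in> ?J"
  have T_zero: "T x y l = 0"
    if "x \<in> ?J" "y \<in> ?J" "l \<in> ?J" "x \<noteq> 0" "y \<noteq> 0" "x = n+1 \<or> y = n+1" for x y l
    using that T_last sym_tensorD(1)[OF T_sym, of x y l] by auto
  consider "0 \<in> {a, b, c, d}"
    | "a \<noteq> 0" "b \<noteq> 0" "c \<noteq> 0" "d \<noteq> 0" "n+1 \<in> {a, b, c, d}"
    | "a \<in> {1..n}" "b \<in> {1..n}" "c \<in> {1..n}" "d \<in> {1..n}"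
    using abcd by fastforce
  then show "?P (T a b) (T c d) = ?P (T c b) (T a d)"
  proof cases
    case 1
    then show ?thesis
      by (rule wdvv_with_unit_index[OF T_sym T_0 abcd])
  next
    case 2
    have "\<forall>l\<in>?J. T x y l = 0" if "x \<in> {a, b, c, d}" "y \<in> {a, b, c, d}" "x = n+1 \<or> y = n+1" for x y
      using that 2 abcd by (auto intro!: T_zero)
    then have "?P (T a b) (T c d) = 0" "?P (T c b) (T a d) = 0"
      using 2(5) by (auto simp del: sum.cl_ivl_Suc)
    then show ?thesis
      by simp
  next
    case 3
    have T_inner_last: "T x y (n+1) = 0" if "x \<in> {1..n}" "y \<in> {1..n}" for x y
      using that T_last sym_tensorD(4)[OF T_sym, of x y "n+1"] by auto
    show ?thesis
      using T_wdvv 3 T_inner_last[OF 3(1,2)] T_inner_last[OF 3(3,4)] T_inner_last[OF 3(3,2)]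
        T_inner_last[OF 3(1,4)]
      unfolding sum_M_split wdvv_def by simp
  qed
qed

context
  fixes F :: "(nat \<Rightarrow> real) \<Rightarrow> real"
  assumes F_vars: "depends_only {1..n} F" and F_smooth: "coord_Ck 3 {1..n} F"
begin

lemma assoc_eqs_Ftilde:
  assumes "assoc_eqs {1..n} eta_inv F"
  shows "assoc_eqs {0..n+1} M (Ftilde n eta F)"
  unfolding assoc_eqs_iff_wdvv
proof
  fix t
  note T = third_pds_Ftilde[OF eta_sym F_vars F_smooth, of t]
  have "wdvv {1..n} eta_inv (\<lambda>a b c. iter_pd [a, b, c] (Ftilde n eta F) t)"
    using assms T(4) unfolding assoc_eqs_iff_wdvv wdvv_def by (simp del: iter_pd.simps)
  then show "wdvv {0..n+1} M (\<lambda>a b c. iter_pd [a, b, c] (Ftilde n eta F) t)"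
    by (rule wdvv_extension[OF T(1-3)])
qed

lemma struct_const_Ftilde_assoc:
  assumes "assoc_eqs {1..n} eta_inv F"
    and "i \<in> {0..n+1}" "j \<in> {0..n+1}" "l \<in> {0..n+1}" "m \<in> {0..n+1}"
  shows "(\<Sum>k\<in>{0..n+1}. struct_const {0..n+1} M (Ftilde n eta F) t k i j
                        * struct_const {0..n+1} M (Ftilde n eta F) t m k l)
    = (\<Sum>k\<in>{0..n+1}. struct_const {0..n+1} M (Ftilde n eta F) t k j l
                        * struct_const {0..n+1} M (Ftilde n eta F) t m i k)"
  using assoc_eqs_Ftilde[OF assms(1)] M_sym assms(2-5)
  unfolding struct_const_def assoc_eqs_iff_wdvv
  by (intro wdvv_imp_assoc third_pds_Ftilde(1)[OF eta_sym F_vars F_smooth]) blast+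

lemma struct_const_Ftilde_unit:
  assumes "k \<in> {0..n+1}" "m \<in> {0..n+1}"
  shows "struct_const {0..n+1} M (Ftilde n eta F) t m 0 k = (if m = k then 1 else 0)"
proof -
  note T = third_pds_Ftilde[OF eta_sym F_vars F_smooth, of t]
  have "iter_pd [l, 0, k] (Ftilde n eta F) t = eta_tilde n eta l k" if "l \<in> {0..n+1}" for l
    using sym_tensorD(1)[OF T(1), of 0 l k] T(2) that assms(1) by simp
  then have "struct_const {0..n+1} M (Ftilde n eta F) t m 0 k
      = (\<Sum>l\<in>{0..n+1}. M m l * eta_tilde n eta l k)"
    unfolding struct_const_def by (intro sum.cong refl) (simp only:)
  then show ?thesis
    using M_eta_tilde[OF assms(2,1)] by simp
qed

lemma struct_const_Ftilde_nilpotent: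
  "struct_const {0..n+1} M (Ftilde n eta F) t k (n+1) (n+1) = 0"
proof -
  note T = third_pds_Ftilde[OF eta_sym F_vars F_smooth, of t]
  have "iter_pd [l, n+1, n+1] (Ftilde n eta F) t = 0" if "l \<in> {0..n+1}" for l
    using sym_tensorD(1)[OF T(1), of "n+1" l "n+1"] T(3) that by simp
  then show ?thesis
    unfolding struct_const_def by (intro sum.neutral ballI) (simp only: mult_zero_right)
qed

end

end

lemma quadratic_form_scale:
  fixes eta :: "nat \<Rightarrow> nat \<Rightarrow> real"
  assumes "\<forall>a\<in>I. \<forall>b\<in>I. eta a b \<noteq> 0 \<longrightarrow> d a + d b = c"
  shows "(\<Sum>a\<in>I. \<Sum>b\<in>I. eta a b * (lam powr d a * t a) * (lam powr d b * t b))
    = lam powr c * (\<Sum>a\<in>I. \<Sum>b\<in>I. eta a b * t a * t b)"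
  unfolding sum_distrib_left
proof (intro sum.cong refl)
  fix a b assume "a \<in> I" "b \<in> I"
  then have "eta a b * lam powr (d a + d b) = eta a b * lam powr c"
    using assms by force
  then show "eta a b * (lam powr d a * t a) * (lam powr d b * t b) = lam powr c * (eta a b * t a * t b)"
    by (simp add: powr_add algebra_simps)
qed

lemma quasihom_Ftilde:
  assumes F_vars: "depends_only {1..n} F" and F_qh: "quasihom {1..n} d dF F"
    and d_eta: "\<forall>a\<in>{1..n}. \<forall>b\<in>{1..n}. eta a b \<noteq> 0 \<longrightarrow> d a + d b = c"
  shows "quasihom {0..n+1} (d(0 := dF - c, n+1 := 2*c - dF)) dF (Ftilde n eta F)"
  unfolding quasihom_def
proof (intro allI impI)
  fix lam :: real and t :: "nat \<Rightarrow> real"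
  assume "lam > 0"
  define d' where "d' = d(0 := dF - c, n+1 := 2*c - dF)"
  define s where "s i = (if i \<in> {0..n+1} then lam powr d' i * t i else t i)" for i
  have s_inner: "s a = lam powr d a * t a" if "a \<in> {1..n}" for a
    using that by (simp add: s_def d'_def)
  have "F s = F (\<lambda>i. if i \<in> {1..n} then lam powr d i * t i else t i)"
    using F_vars s_inner unfolding depends_only_def by auto
  also have "\<dots> = lam powr dF * F t"
    using F_qh \<open>lam > 0\<close> unfolding quasihom_def by blast
  finally have "F s = lam powr dF * F t" .
  moreover have "(\<Sum>a\<in>{1..n}. \<Sum>b\<in>{1..n}. eta a b * s a * s b)
      = lam powr c * (\<Sum>a\<in>{1..n}. \<Sum>b\<in>{1..n}. eta a b * t a * t b)"
    using quadratic_form_scale[OF d_eta, of lam t] by (simp add: s_inner)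
  moreover have "s 0 = lam powr (dF - c) * t 0" "s (n+1) = lam powr (2*c - dF) * t (n+1)"
    by (simp_all add: s_def d'_def)
  moreover have "lam powr c * lam powr (dF - c) = lam powr dF"
    "(lam powr (dF - c))\<^sup>2 * lam powr (2*c - dF) = lam powr dF"
    by (simp_all add: power2_eq_square powr_add[symmetric])
  ultimately show "Ftilde n eta F s = lam powr dF * Ftilde n eta F t"
    unfolding s_def[symmetric] d'_def[symmetric] Ftilde_def
    by (simp add: power_mult_distrib algebra_simps)
qed

theorem lemma3:
  fixes n :: nat and eta eta_inv :: "nat \<Rightarrow> nat \<Rightarrow> real"
    and F :: "(nat \<Rightarrow> real) \<Rightarrow> real"
  assumes eta_sym: "\<forall>a\<in>{1..n}. \<forall>b\<in>{1..n}. eta a b = eta b a"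
    and eta_inv: "\<forall>a\<in>{1..n}. \<forall>b\<in>{1..n}.
                    (\<Sum>l\<in>{1..n}. eta a l * eta_inv l b) = (if a = b then 1 else 0)"
    and F_vars: "depends_only {1..n} F"
    and F_smooth: "coord_Ck 3 {1..n} F"
    and F_assoc: "assoc_eqs {1..n} eta_inv F"
  shows "(\<forall>M. (\<forall>k\<in>{0..n+1}. \<forall>m\<in>{0..n+1}.
                (\<Sum>l\<in>{0..n+1}. eta_tilde n eta k l * M l m) = (if k = m then 1 else 0)) \<longrightarrow>
           assoc_eqs {0..n+1} M (Ftilde n eta F)
         \<and> (\<forall>t. \<forall>i\<in>{0..n+1}. \<forall>j\<in>{0..n+1}. \<forall>l\<in>{0..n+1}. \<forall>m\<in>{0..n+1}.
              (\<Sum>k\<in>{0..n+1}. struct_const {0..n+1} M (Ftilde n eta F) t k i j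
                                * struct_const {0..n+1} M (Ftilde n eta F) t m k l)
            = (\<Sum>k\<in>{0..n+1}. struct_const {0..n+1} M (Ftilde n eta F) t k j l
                                * struct_const {0..n+1} M (Ftilde n eta F) t m i k))
         \<and> (\<forall>t. \<forall>k\<in>{0..n+1}. \<forall>m\<in>{0..n+1}.
              struct_const {0..n+1} M (Ftilde n eta F) t m 0 k = (if m = k then 1 else 0))
         \<and> (\<forall>t. \<forall>k\<in>{0..n+1}. struct_const {0..n+1} M (Ftilde n eta F) t k (n+1) (n+1) = 0))
    \<and> (\<forall>d dF c. quasihom {1..n} d dF F \<and>
           (\<forall>a\<in>{1..n}. \<forall>b\<in>{1..n}. eta a b \<noteq> 0 \<longrightarrow> d a + d b = c) \<longrightarrow>
           quasihom {0..n+1} (d(0 := dF - c, n+1 := 2*c - dF)) dF (Ftilde n eta F))"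
  using assoc_eqs_Ftilde[OF eta_sym eta_inv _ F_vars F_smooth F_assoc]
    struct_const_Ftilde_assoc[OF eta_sym eta_inv _ F_vars F_smooth F_assoc]
    struct_const_Ftilde_unit[OF eta_sym eta_inv _ F_vars F_smooth]
    struct_const_Ftilde_nilpotent[OF eta_sym eta_inv _ F_vars F_smooth]
    quasihom_Ftilde[OF F_vars]
  by blast

end
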